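(* Let $\mathcal{T}$ be a planar triangulation, $m\in\mathbb{Z}_{\ge0}$, $r\in\mathbb{Z}_{\ge-1}$, and $\mathbf{r}$ a smoothness distribution with values in $\{r,-1\}$ on interior edges. Let $\sigma$ be a face bounded by interior edges $\tau_1,\tau_2,\tau_3$ with $\mathbf r(\tau_i)=r$, let $\gamma_i=\tau_i\cap\tau_{i+1}$ (indices cyclic in $1,2,3$) be interior vertices with $\mathbf r(\tau)\ne-1$ for every edge $\tau$ incident on any $\gamma_i$, and let $\ell_i$ be an affine-linear form vanishing on $\tau_i$. Let $$\phi:\bigoplus_{i=1}^3{\mathcal{P}}_m/\langle\ell_i^{r+1}\rangle\longrightarrow\bigoplus_{i=1}^3{\mathcal{P}}_m/\mathfrak{J}^{\mathbf r}_{\gamma_i},\qquad (a_1,a_2,a_3)\mapsto(-a_1+a_2,\,-a_2+a_3,\,a_1-a_3),$$ and let $\mathbf s$ agree with $\mathbf r$ except that $\mathbf s(\tau_i)=-1$ for $i=1,2,3$. Then the cokernel of $\phi$, and hence $H_0(\mathcal{I}^{\mathbf s}/\mathcal{I}^{\mathbf r})$, is isomorphic to ${\mathcal{P}}_m/(\mathfrak{J}^{\mathbf r}_{\gamma_1}+\mathfrak{J}^{\mathbf r}_{\gamma_2}+\mathfrak{J}^{\mathbf r}_{\gamma_3})$.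
   Context: $\mathcal{T}$ is a finite planar triangulation of a closed polygonal region $\Omega\subset\mathbb{R}^2$ (possibly not simply connected). An edge or vertex is interior if it is not contained in $\partial\Omega$; $\mathcal{T}^\circ_1,\mathcal{T}^\circ_0$ denote interior edges and vertices. ${\mathcal{P}}_m$ is the space of real bivariate polynomials of total degree at most $m$; $\langle f_1,\dots,f_k\rangle$ denotes the subspace of ${\mathcal{P}}_m$ of all polynomial combinations $\sum g_if_i$ lying in ${\mathcal{P}}_m$. A smoothness distribution is a map $\mathbf{r}:\mathcal{T}^\circ_1\to\mathbb{Z}_{\ge -1}$. For $\tau\in\mathcal{T}^\circ_1$ with vanishing affine-linear form $\ell_\tau$, $\mathfrak{J}^{\mathbf r}_\tau=\langle \ell_\tau^{\mathbf r(\tau)+1}\rangle$ (equal to ${\mathcal{P}}_m$ if $\mathbf r(\tau)=-1$), and for $\gamma\in\mathcal{T}^\circ_0$, $\mathfrak{J}^{\mathbf r}_\gamma=\sum_{\tau\ni\gamma}\mathfrak{J}^{\mathbf r}_\tau$. $\mathcal{I}^{\mathbf r}$ is the chain complex $0\to\bigoplus_{\tau\in\mathcal{T}^\circ_1}\mathfrak{J}^{\mathbf r}_\tau\to\bigoplus_{\gamma\in\mathcal{T}^\circ_0}\mathfrak{J}^{\mathbf r}_\gamma$ (degrees $2,1,0$), whose nonzero map is the cellular boundary map of $\mathcal{T}$ relative to $\partial\Omega$ (signs $\pm1$ from fixed edge orientations). If $\mathbf s\le\mathbf r$ pointwise then $\mathcal{I}^{\mathbf r}\subseteq\mathcal{I}^{\mathbf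 s}$ and $\mathcal{I}^{\mathbf s}/\mathcal{I}^{\mathbf r}$ is the quotient complex. *)

theory Defs
  imports "HOL-Analysis.Analysis" "HOL-Computational_Algebra.Polynomial"
    "HOL-Library.Function_Algebras"
begin

type_synonym pt = "real \<times> real"

text \<open>Real bivariate polynomials: polynomials in y whose coefficients are
  polynomials in x.\<close>
type_synonym bipoly = "real poly poly"

definition eval2 :: "bipoly \<Rightarrow> pt \<Rightarrow> real" where
  "eval2 f p = poly (map_poly (\<lambda>c. poly c (fst p)) f) (snd p)"

definition Pm :: "nat \<Rightarrow> bipoly set" where
  "Pm m = {f. \<forall>j. coeff f j \<noteq> 0 \<longrightarrow> degree (coeff f j) + j \<le> m}"

definition psc :: "real \<Rightarrow> bipoly \<Rightarrow> bipoly" where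
  "psc c f = smult [:c:] f"

definition fsc :: "real \<Rightarrow> ('a \<Rightarrow> bipoly) \<Rightarrow> ('a \<Rightarrow> bipoly)" where
  "fsc c g = (\<lambda>x. psc c (g x))"

definition gen1 :: "nat \<Rightarrow> bipoly \<Rightarrow> bipoly set" where
  "gen1 m f = {h \<in> Pm m. \<exists>g. h = g * f}"

text \<open>Affine-linear form vanishing on the line through p and q.\<close>
definition line_form :: "pt \<Rightarrow> pt \<Rightarrow> bipoly" where
  "line_form p q = [:[: (fst q - fst p) * snd p - (snd q - snd p) * fst p, snd q - snd p :],
                     [: fst p - fst q :]:]"

definition region :: "pt set set \<Rightarrow> pt set" where
  "region T = (\<Union>\<sigma>\<in>T. convex hull \<sigma>)"

definition triangulation :: "pt set set \<Rightarrow> bool" where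
  "triangulation T \<longleftrightarrow> finite T \<and> T \<noteq> {} \<and>
     (\<forall>\<sigma>\<in>T. card \<sigma> = 3 \<and> \<not> collinear \<sigma>) \<and>
     (\<forall>\<sigma>\<in>T. \<forall>\<sigma>'\<in>T. convex hull \<sigma> \<inter> convex hull \<sigma>' = convex hull (\<sigma> \<inter> \<sigma>')) \<and>
     connected (region T)"

definition edges :: "pt set set \<Rightarrow> pt set set" where
  "edges T = {e. \<exists>\<sigma>\<in>T. e \<subseteq> \<sigma> \<and> card e = 2}"

definition int_edges :: "pt set set \<Rightarrow> pt set set" where
  "int_edges T = {e \<in> edges T. \<not> (convex hull e \<subseteq> frontier (region T))}"

definition int_vertices :: "pt set set \<Rightarrow> pt set" where
  "int_vertices T = {v \<in> \<Union>T. v \<notin> frontier (region T)}"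

definition edges_at :: "pt set set \<Rightarrow> pt \<Rightarrow> pt set set" where
  "edges_at T v = {e \<in> int_edges T. v \<in> e}"

definition smoothness_distribution :: "pt set set \<Rightarrow> (pt set \<Rightarrow> int) \<Rightarrow> bool" where
  "smoothness_distribution T r \<longleftrightarrow> (\<forall>e\<in>int_edges T. r e \<ge> -1)"

text \<open>J^r_tau = < l_tau^(r(tau)+1) > (all of P_m when r(tau) = -1).\<close>
definition J_edge :: "nat \<Rightarrow> (pt set \<Rightarrow> int) \<Rightarrow> pt set \<Rightarrow> bipoly set" where
  "J_edge m r e = {h \<in> Pm m. \<exists>p q g. e = {p, q} \<and> h = g * line_form p q ^ nat (r e + 1)}"

definition J_vertex :: "nat \<Rightarrow> pt set set \<Rightarrow> (pt set \<Rightarrow> int) \<Rightarrow> pt \<Rightarrow> bipoly set" where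
  "J_vertex m T r v = {h. \<exists>f. (\<forall>e\<in>edges_at T v. f e \<in> J_edge m r e) \<and>
                              h = (\<Sum>e\<in>edges_at T v. f e)}"

text \<open>Cellular boundary (relative to the boundary of the region) of a 1-chain,
  for an orientation given by the head head e of each edge e.\<close>
definition bd :: "pt set set \<Rightarrow> (pt set \<Rightarrow> pt) \<Rightarrow> (pt set \<Rightarrow> bipoly) \<Rightarrow> pt \<Rightarrow> bipoly" where
  "bd T head f v = (\<Sum>e\<in>edges_at T v. if head e = v then f e else - f e)"

text \<open>Degree-0 and degree-1 chains of I^r (representatives, zero off the index set).\<close>
definition C0 :: "nat \<Rightarrow> pt set set \<Rightarrow> (pt set \<Rightarrow> int) \<Rightarrow> (pt \<Rightarrow> bipoly) set" where
  "C0 m T r = {g. \<forall>v. (v \<in> int_vertices T \<longrightarrow> g v \<in> J_vertex m T r v) \<and>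
                       (v \<notin> int_vertices T \<longrightarrow> g v = 0)}"

definition C1 :: "nat \<Rightarrow> pt set set \<Rightarrow> (pt set \<Rightarrow> int) \<Rightarrow> (pt set \<Rightarrow> bipoly) set" where
  "C1 m T r = {f. \<forall>e. (e \<in> int_edges T \<longrightarrow> f e \<in> J_edge m r e) \<and>
                       (e \<notin> int_edges T \<longrightarrow> f e = 0)}"

text \<open>H_0(I^s / I^r) = C0(I^s) / (C0(I^r) + bd C1(I^s)); this is the subspace
  of C0(I^s) that is divided out.\<close>
definition H0_rel :: "nat \<Rightarrow> pt set set \<Rightarrow> (pt set \<Rightarrow> pt) \<Rightarrow> (pt set \<Rightarrow> int) \<Rightarrow> (pt set \<Rightarrow> int)
    \<Rightarrow> (pt \<Rightarrow> bipoly) set" where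
  "H0_rel m T head s r = {g \<in> C0 m T s. \<exists>f \<in> C1 m T s. \<forall>v \<in> int_vertices T.
                          g v - bd T head f v \<in> J_vertex m T r v}"

text \<open>V/W and V'/W' are isomorphic as real vector spaces, witnessed by a
  linear map F : V \<rightarrow> V' inducing a bijection V/W \<rightarrow> V'/W'.\<close>
definition quot_iso :: "(real \<Rightarrow> 'a \<Rightarrow> 'a) \<Rightarrow> (real \<Rightarrow> 'b \<Rightarrow> 'b) \<Rightarrow>
    'a::ab_group_add set \<Rightarrow> 'a set \<Rightarrow> 'b::ab_group_add set \<Rightarrow> 'b set \<Rightarrow> bool" where
  "quot_iso sa sb V W V' W' \<longleftrightarrow> (\<exists>F.
     (\<forall>x\<in>V. F x \<in> V') \<and>
     (\<forall>x\<in>V. \<forall>y\<in>V. F (x + y) = F x + F y) \<and>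
     (\<forall>c. \<forall>x\<in>V. F (sa c x) = sb c (F x)) \<and>
     (\<forall>x\<in>V. F x \<in> W' \<longleftrightarrow> x \<in> W) \<and>
     (\<forall>y\<in>V'. \<exists>x\<in>V. y - F x \<in> W'))"

text \<open>Representatives of the direct sum of three copies of P_m (indices 0,1,2).\<close>
definition Pm3 :: "nat \<Rightarrow> (nat \<Rightarrow> bipoly) set" where
  "Pm3 m = {a. \<forall>i. (i < 3 \<longrightarrow> a i \<in> Pm m) \<and> (\<not> i < 3 \<longrightarrow> a i = 0)}"

text \<open>phi(a_1,a_2,a_3) = (-a_1+a_2, -a_2+a_3, a_1-a_3), indices shifted to 0,1,2.\<close>
definition phi_rep :: "(nat \<Rightarrow> bipoly) \<Rightarrow> nat \<Rightarrow> bipoly" where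
  "phi_rep a i = (if i < 3 then - a i + a (Suc i mod 3) else 0)"

text \<open>Subspace of representatives in the codomain of phi that vanish in coker phi:
  b with b_i \<equiv> phi(a)_i mod J_(gamma_i) for some a.\<close>
definition coker_rel :: "nat \<Rightarrow> (nat \<Rightarrow> bipoly set) \<Rightarrow> (nat \<Rightarrow> bipoly) set" where
  "coker_rel m J = {b \<in> Pm3 m. \<exists>a \<in> Pm3 m. \<forall>i<3. b i - phi_rep a i \<in> J i}"

end

theory Submission
  imports Defs
begin

text \<open>Both quotients are identified with \<open>P\<^sub>m / (J\<^sub>\<gamma>\<^sub>1 + J\<^sub>\<gamma>\<^sub>2 + J\<^sub>\<gamma>\<^sub>3)\<close> by adding up the
  three components. For \<open>coker \<phi>\<close> the components of \<open>\<phi>(a)\<close> sum to zero, and conversely if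
  \<open>b\<^sub>1 + b\<^sub>2 + b\<^sub>3 = j\<^sub>1 + j\<^sub>2 + j\<^sub>3\<close> with \<open>j\<^sub>i \<in> J\<^sub>\<gamma>\<^sub>i\<close>, then \<open>(b\<^sub>i - j\<^sub>i)\<^sub>i\<close> is the image under
  \<open>\<phi>\<close> of the partial sums \<open>(0, b\<^sub>1 - j\<^sub>1, b\<^sub>1 - j\<^sub>1 + b\<^sub>2 - j\<^sub>2)\<close>.
  For \<open>H\<^sub>0(I\<^sup>s / I\<^sup>r)\<close>: since \<open>s = -1\<close> on the three sides, \<open>J\<^sup>s\<close> is all of \<open>P\<^sub>m\<close> at each
  corner. Summing over the corners kills the boundary of every 1-chain carried by the sides (each
  edge contributes \<open>+a\<close> at one end and \<open>-a\<close> at the other), while chains on the remaining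
  edges have boundaries in \<open>J\<^sup>r\<close>; conversely a chain on two of the sides moves the defects at
  two corners into the third. Neither the value of \<open>r\<close> nor the forms \<open>\<ell>\<^sub>i\<close> play a role.\<close>

lemma card_2_other:
  assumes "card e = 2" "x \<in> e"
  obtains y where "e = {x, y}" "y \<noteq> x"
  using assms by (auto simp: card_2_iff doubleton_eq_iff)

lemma card_2_eq_pair: "card A = 2 \<Longrightarrow> x \<in> A \<Longrightarrow> z \<in> A \<Longrightarrow> z \<noteq> x \<Longrightarrow> A = {x, z}"
  by (erule card_2_other) auto

section \<open>Polynomials of bounded degree and the spaces \<open>J\<close>\<close>

lemma Pm_zero [simp]: "0 \<in> Pm m"
  by (simp add: Pm_def)

lemma Pm_uminus: "f \<in> Pm m \<Longrightarrow> - f \<in> Pm m"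
  by (simp add: Pm_def)

lemma Pm_add:
  assumes "f \<in> Pm m" "g \<in> Pm m"
  shows "f + g \<in> Pm m"
proof -
  have "degree (coeff (f + g) j) + j \<le> m" if "coeff (f + g) j \<noteq> 0" for j
  proof (cases "coeff f j = 0 \<or> coeff g j = 0")
    case True
    with that assms show ?thesis by (auto simp: Pm_def)
  next
    case False
    with assms have "degree (coeff f j) \<le> m - j" "degree (coeff g j) \<le> m - j" "j \<le> m"
      by (auto simp: Pm_def)
    then show ?thesis using degree_add_le[of "coeff f j" "m - j" "coeff g j"] by simp
  qed
  then show ?thesis by (simp add: Pm_def)
qed

lemma Pm_diff: "f \<in> Pm m \<Longrightarrow> g \<in> Pm m \<Longrightarrow> f - g \<in> Pm m"
  using Pm_add[OF _ Pm_uminus] by (metis diff_conv_add_uminus)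

lemma Pm_sum: "(\<And>x. x \<in> A \<Longrightarrow> f x \<in> Pm m) \<Longrightarrow> sum f A \<in> Pm m"
  by (induction A rule: infinite_finite_induct) (auto simp: Pm_add)

lemma line_form_swap: "line_form q p = - line_form p q"
  by (simp add: line_form_def algebra_simps)

lemma line_form_power_dvd_iff:
  assumes "{p', q'} = {p, q}"
  shows "line_form p' q' ^ n dvd h \<longleftrightarrow> line_form p q ^ n dvd h"
proof -
  from assms consider "p' = p" "q' = q" | "p' = q" "q' = p"
    unfolding doubleton_eq_iff by blast
  then show ?thesis
  proof cases
    case 2
    then show ?thesis
      using line_form_swap[of q p] by (cases "even n") (simp_all add: minus_dvd_iff)
  qed simp
qed

lemma J_edge_altdef:
  assumes "e = {p, q}"
  shows "J_edge m r e = {h \<in> Pm m. line_form p q ^ nat (r e + 1) dvd h}"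
proof -
  have "J_edge m r e = {h \<in> Pm m. \<exists>p' q'. e = {p', q'} \<and> line_form p' q' ^ nat (r e + 1) dvd h}"
    unfolding J_edge_def dvd_def by (auto simp: mult.commute)
  then show ?thesis
    using assms line_form_power_dvd_iff by blast
qed

lemma card_int_edge: "e \<in> int_edges T \<Longrightarrow> card e = 2"
  by (auto simp: int_edges_def edges_def)

lemma J_edge_zero: "card e = 2 \<Longrightarrow> 0 \<in> J_edge m r e"
  by (auto simp: card_2_iff J_edge_altdef)

lemma J_edge_uminus: "h \<in> J_edge m r e \<Longrightarrow> - h \<in> J_edge m r e"
  by (auto simp: J_edge_def Pm_uminus) (metis minus_mult_left)

lemma J_edge_add:
  assumes "h \<in> J_edge m r e" "h' \<in> J_edge m r e"
  shows "h + h' \<in> J_edge m r e"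
proof -
  obtain p q where "e = {p, q}"
    using assms(1) by (auto simp: J_edge_def)
  with assms show ?thesis by (auto simp: J_edge_altdef Pm_add)
qed

lemma J_edge_eq_Pm: "card e = 2 \<Longrightarrow> r e = -1 \<Longrightarrow> J_edge m r e = Pm m"
  by (auto simp: card_2_iff J_edge_altdef)

lemma J_edge_cong: "r e = s e \<Longrightarrow> J_edge m r e = J_edge m s e"
  by (simp add: J_edge_def)

lemma J_vertex_zero: "0 \<in> J_vertex m T r v"
  by (auto simp: J_vertex_def edges_at_def card_int_edge J_edge_zero intro!: exI[of _ "\<lambda>_. 0"])

lemma J_vertex_add:
  assumes "h \<in> J_vertex m T r v" "h' \<in> J_vertex m T r v"
  shows "h + h' \<in> J_vertex m T r v"
proof -
  obtain f f' where "\<forall>e\<in>edges_at T v. f e \<in> J_edge m r e \<and> f' e \<in> J_edge m r e"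
    and "h = sum f (edges_at T v)" "h' = sum f' (edges_at T v)"
    using assms by (auto simp: J_vertex_def)
  then show ?thesis
    unfolding J_vertex_def by (auto simp: J_edge_add sum.distrib intro!: exI[of _ "\<lambda>e. f e + f' e"])
qed

lemma J_vertex_subset_Pm: "J_vertex m T r v \<subseteq> Pm m"
  by (auto simp: J_vertex_def J_edge_def intro!: Pm_sum)

lemma J_vertex_eq_Pm:
  assumes "finite (edges_at T v)" "t \<in> edges_at T v" "r t = -1"
  shows "J_vertex m T r v = Pm m"
proof (intro subset_antisym J_vertex_subset_Pm subsetI)
  fix h assume h: "h \<in> Pm m"
  have "(if e = t then h else 0) \<in> J_edge m r e" if "e \<in> edges_at T v" for e
  proof -
    have "card e = 2"
      using that by (auto simp: edges_at_def intro: card_int_edge)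
    then show ?thesis
      using h assms(3) by (auto simp: J_edge_zero J_edge_eq_Pm)
  qed
  moreover have "h = (\<Sum>e\<in>edges_at T v. if e = t then h else 0)"
    using assms(1,2) by (simp add: sum.delta)
  ultimately show "h \<in> J_vertex m T r v"
    unfolding J_vertex_def by (intro CollectI exI[of _ "\<lambda>e. if e = t then h else 0"] conjI ballI)
qed

lemma J_vertex_cong:
  "(\<And>e. e \<in> edges_at T v \<Longrightarrow> r e = s e) \<Longrightarrow> J_vertex m T r v = J_vertex m T s v"
  unfolding J_vertex_def by (metis (no_types, lifting) J_edge_cong)

lemma C0_in_J_vertex: "g \<in> C0 m T r \<Longrightarrow> v \<in> int_vertices T \<Longrightarrow> g v \<in> J_vertex m T r v"
  unfolding C0_def by blast

lemma C0_in_Pm: "g \<in> C0 m T r \<Longrightarrow> v \<in> int_vertices T \<Longrightarrow> g v \<in> Pm m"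
  using C0_in_J_vertex J_vertex_subset_Pm by blast

section \<open>The cellular boundary\<close>

lemma finite_edges_at: "finite (int_edges T) \<Longrightarrow> finite (edges_at T v)"
  unfolding edges_at_def by simp

lemma bd_add: "bd T head (\<lambda>e. f e + g e) v = bd T head f v + bd T head g v"
  unfolding bd_def by (simp add: sum.distrib[symmetric] if_distrib) (rule sum.cong, auto)

lemma bd_in_J_vertex:
  "(\<And>e. e \<in> edges_at T v \<Longrightarrow> f e \<in> J_edge m r e) \<Longrightarrow> bd T head f v \<in> J_vertex m T r v"
  unfolding bd_def J_vertex_def
  by (auto intro!: exI[of _ "\<lambda>e. if head e = v then f e else - f e"] J_edge_uminus)

lemma bd_eq_sum_int_edges:
  assumes "finite (int_edges T)"
  shows "bd T head f v = (\<Sum>e\<in>int_edges T. if v \<in> e then (if head e = v then f e else - f e) else 0)"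
  unfolding bd_def edges_at_def using assms by (rule sum.inter_filter)

lemma bd_single:
  assumes "finite (int_edges T)" "t \<in> int_edges T"
  shows "bd T head (\<lambda>e. if e = t then a else 0) v = (if v \<in> t then (if head t = v then a else - a) else 0)"
proof -
  have "bd T head (\<lambda>e. if e = t then a else 0) v
      = (\<Sum>e\<in>edges_at T v. if e = t then (if head t = v then a else - a) else 0)"
    unfolding bd_def by (rule sum.cong) auto
  also have "\<dots> = (if t \<in> edges_at T v then (if head t = v then a else - a) else 0)"
    using finite_edges_at[OF assms(1)] by (simp add: sum.delta')
  finally show ?thesis
    using assms(2) by (simp add: edges_at_def)
qed

lemma sum_pair_cancel: "w \<noteq> x \<Longrightarrow> (\<Sum>v\<in>{x, w}. if x = v then c else - c) = (0::'a::ab_group_add)"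
  by simp

lemma sum_bd_eq_0:
  assumes fin: "finite (int_edges T)" "finite \<Gamma>"
    and head: "\<And>e. e \<in> int_edges T \<Longrightarrow> head e \<in> e"
    and supp: "\<And>e. e \<in> int_edges T \<Longrightarrow> f e \<noteq> 0 \<Longrightarrow> e \<subseteq> \<Gamma>"
  shows "(\<Sum>v\<in>\<Gamma>. bd T head f v) = 0"
proof -
  have "(\<Sum>v\<in>\<Gamma>. if v \<in> e then (if head e = v then f e else - f e) else 0) = 0"
    if e: "e \<in> int_edges T" for e
  proof (cases "f e = 0")
    case False
    obtain w where ew: "e = {head e, w}" "w \<noteq> head e"
      using card_int_edge[OF e] head[OF e] by (rule card_2_other)
    have "(\<Sum>v\<in>\<Gamma>. if v \<in> e then (if head e = v then f e else - f e) else 0)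
        = (\<Sum>v\<in>e. if head e = v then f e else - f e)"
      using supp[OF e False] fin(2) by (simp add: sum.inter_filter[symmetric] Int_absorb1 Collect_mem_eq
          flip: Int_def)
    also have "\<dots> = (\<Sum>v\<in>{head e, w}. if head e = v then f e else - f e)"
      using ew(1) by (rule arg_cong)
    also have "\<dots> = 0"
      using ew(2) by (rule sum_pair_cancel)
    finally show ?thesis .
  qed (intro sum.neutral, auto)
  then have "(\<Sum>e\<in>int_edges T. \<Sum>v\<in>\<Gamma>. if v \<in> e then (if head e = v then f e else - f e) else 0) = 0"
    by (intro sum.neutral) auto
  then show ?thesis
    by (simp add: bd_eq_sum_int_edges[OF fin(1)] sum.swap[of _ \<Gamma>])
qed

definition edge_chain :: "(pt set \<Rightarrow> pt) \<Rightarrow> pt set \<Rightarrow> pt \<Rightarrow> bipoly \<Rightarrow> pt set \<Rightarrow> bipoly" where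
  "edge_chain head t p c = (\<lambda>e. if e = t then (if head t = p then c else - c) else 0)"

lemma bd_edge_chain:
  assumes "finite (int_edges T)" "t \<in> int_edges T" "head t \<in> t" "p \<in> t"
  shows "bd T head (edge_chain head t p c) v = (if v = p then c else if v \<in> t then - c else 0)"
proof -
  obtain q where "t = {p, q}" "q \<noteq> p"
    using card_int_edge[OF assms(2)] assms(4) by (rule card_2_other)
  with assms show ?thesis
    by (auto simp: edge_chain_def bd_single)
qed

lemma edge_chain_in_C1:
  assumes "t \<in> int_edges T" "r t = -1" "c \<in> Pm m"
  shows "edge_chain head t p c \<in> C1 m T r"
proof -
  have "edge_chain head t p c e \<in> J_edge m r e" if e: "e \<in> int_edges T" for e
    using assms J_edge_zero[OF card_int_edge[OF e]] J_edge_eq_Pm[OF card_int_edge[OF e]]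
    by (auto simp: edge_chain_def Pm_uminus)
  moreover have "edge_chain head t p c e = 0" if "e \<notin> int_edges T" for e
    using that assms(1) by (auto simp: edge_chain_def)
  ultimately show ?thesis
    by (simp add: C1_def)
qed

lemma C1_add: "f \<in> C1 m T r \<Longrightarrow> g \<in> C1 m T r \<Longrightarrow> (\<lambda>e. f e + g e) \<in> C1 m T r"
  by (simp add: C1_def J_edge_add)

lemma bd_off_in_J_vertex:
  assumes "f \<in> C1 m T s" "\<And>e. e \<notin> E \<Longrightarrow> s e = r e"
  shows "bd T head (\<lambda>e. if e \<in> E then 0 else f e) v \<in> J_vertex m T r v"
proof (rule bd_in_J_vertex)
  fix e assume "e \<in> edges_at T v"
  then have e: "e \<in> int_edges T"
    by (simp add: edges_at_def)
  show "(if e \<in> E then 0 else f e) \<in> J_edge m r e"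
  proof (cases "e \<in> E")
    case False
    then have "J_edge m s e = J_edge m r e"
      by (intro J_edge_cong assms(2))
    with False e assms(1) show ?thesis
      by (auto simp: C1_def)
  qed (simp add: J_edge_zero card_int_edge[OF e])
qed

section \<open>Quotients identified by summation\<close>

lemma quot_iso_sum3I:
  fixes V :: "('a \<Rightarrow> bipoly) set" and a\<^sub>0 a\<^sub>1 a\<^sub>2 :: 'a
  assumes "\<And>x. x \<in> V \<Longrightarrow> x a\<^sub>0 \<in> Pm m \<and> x a\<^sub>1 \<in> Pm m \<and> x a\<^sub>2 \<in> Pm m"
    and "\<And>x. x \<in> V \<Longrightarrow> x a\<^sub>0 + x a\<^sub>1 + x a\<^sub>2 \<in> W' \<longleftrightarrow> x \<in> W"
    and "\<And>y. y \<in> Pm m \<Longrightarrow> (\<lambda>v. if v = a\<^sub>0 then y else 0) \<in> V"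
    and "a\<^sub>1 \<noteq> a\<^sub>0" "a\<^sub>2 \<noteq> a\<^sub>0" "0 \<in> W'"
  shows "quot_iso fsc psc V W (Pm m) W'"
  unfolding quot_iso_def
proof (intro exI[of _ "\<lambda>x. x a\<^sub>0 + x a\<^sub>1 + x a\<^sub>2"] conjI ballI allI)
  fix y :: bipoly assume "y \<in> Pm m"
  with assms(3-6) show "\<exists>x\<in>V. y - (x a\<^sub>0 + x a\<^sub>1 + x a\<^sub>2) \<in> W'"
    by (intro bexI[of _ "\<lambda>v. if v = a\<^sub>0 then y else 0"]) auto
qed (use assms(1,2) in \<open>auto simp: Pm_add fsc_def psc_def smult_add_right\<close>)

abbreviation set_sum3 :: "'a::plus set \<Rightarrow> 'a set \<Rightarrow> 'a set \<Rightarrow> 'a set" where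
  "set_sum3 A B C \<equiv> {a + b + c | a b c. a \<in> A \<and> b \<in> B \<and> c \<in> C}"

lemma set_sum3_iff_coker_rel:
  assumes x: "x \<in> Pm3 m" and J: "\<And>i. J i \<subseteq> Pm m"
  shows "x 0 + x 1 + x 2 \<in> set_sum3 (J 0) (J 1) (J 2) \<longleftrightarrow> x \<in> coker_rel m J"
proof
  assume "x 0 + x 1 + x 2 \<in> set_sum3 (J 0) (J 1) (J 2)"
  then obtain j\<^sub>0 j\<^sub>1 j\<^sub>2 where j: "j\<^sub>0 \<in> J 0" "j\<^sub>1 \<in> J 1" "j\<^sub>2 \<in> J 2"
    and sum: "x 0 + x 1 + x 2 = j\<^sub>0 + j\<^sub>1 + j\<^sub>2" by blast
  define a where "a = (\<lambda>i::nat. if i = 1 then x 0 - j\<^sub>0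
                               else if i = 2 then (x 0 - j\<^sub>0) + (x 1 - j\<^sub>1) else 0)"
  have "a \<in> Pm3 m"
    using x j J by (auto simp: Pm3_def a_def intro!: Pm_add Pm_diff)
  moreover have "x i - phi_rep a i \<in> J i" if "i < 3" for i
  proof -
    have "i = 0 \<or> i = 1 \<or> i = 2" using that by auto
    moreover have "x 2 - phi_rep a 2 = j\<^sub>2"
      using sum by (simp add: phi_rep_def a_def algebra_simps numeral_2_eq_2)
    ultimately show ?thesis
      using j by (auto simp: phi_rep_def a_def numeral_2_eq_2)
  qed
  ultimately show "x \<in> coker_rel m J"
    using x by (auto simp: coker_rel_def)
next
  assume "x \<in> coker_rel m J"
  then obtain a where a: "\<forall>i<3. x i - phi_rep a i \<in> J i"
    by (auto simp: coker_rel_def)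
  have "x 0 + x 1 + x 2 = (x 0 - phi_rep a 0) + (x 1 - phi_rep a 1) + (x 2 - phi_rep a 2)"
    by (simp add: phi_rep_def algebra_simps numeral_2_eq_2)
  with a show "x 0 + x 1 + x 2 \<in> set_sum3 (J 0) (J 1) (J 2)"
    by fastforce
qed

lemma quot_iso_coker:
  assumes "\<And>i. 0 \<in> J i" "\<And>i. J i \<subseteq> Pm m"
  shows "quot_iso fsc psc (Pm3 m) (coker_rel m J) (Pm m) (set_sum3 (J 0) (J 1) (J 2))"
proof (rule quot_iso_sum3I[where a\<^sub>0 = 0 and a\<^sub>1 = 1 and a\<^sub>2 = 2])
  show "x 0 + x 1 + x 2 \<in> set_sum3 (J 0) (J 1) (J 2) \<longleftrightarrow> x \<in> coker_rel m J" if "x \<in> Pm3 m" for x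
    using that assms(2) by (rule set_sum3_iff_coker_rel)
  show "0 \<in> set_sum3 (J 0) (J 1) (J 2)"
    using assms(1) by force
qed (auto simp: Pm3_def)

section \<open>A triangle of interior edges\<close>

lemma card_3_no_common_point:
  assumes "card S = 3" "A \<subseteq> S" "B \<subseteq> S" "C \<subseteq> S" "card A = 2" "card B = 2" "card C = 2"
    and "A \<noteq> B" "B \<noteq> C" "A \<noteq> C"
  shows "A \<inter> B \<inter> C = {}"
proof (rule ccontr)
  assume "A \<inter> B \<inter> C \<noteq> {}"
  then obtain w where w: "w \<in> A" "w \<in> B" "w \<in> C" by blast
  obtain a b c where "A = {w, a}" "a \<noteq> w" "B = {w, b}" "b \<noteq> w" "C = {w, c}" "c \<noteq> w"
    using card_2_other[OF assms(5) w(1)] card_2_other[OF assms(6) w(2)] card_2_other[OF assms(7) w(3)]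
    by metis
  with assms(2-4,8-10) have "{w, a, b, c} \<subseteq> S" "card {w, a, b, c} = 4"
    by auto
  moreover have "finite S"
    using assms(1) by (simp add: card_ge_0_finite)
  ultimately show False
    using card_mono[of S "{w, a, b, c}"] assms(1) by simp
qed

lemma triangle_sides:
  assumes "card S = 3" "A \<subseteq> S" "B \<subseteq> S" "C \<subseteq> S" "card A = 2" "card B = 2" "card C = 2"
    and "A \<noteq> B" "B \<noteq> C" "A \<noteq> C"
    and AB: "A \<inter> B = {x}" and BC: "B \<inter> C = {y}" and CA: "C \<inter> A = {z}"
  shows "x \<noteq> y" "y \<noteq> z" "x \<noteq> z" "A = {x, z}" "B = {x, y}" "C = {y, z}"
proof -
  have "A \<inter> B \<inter> C = {}"
    using assms(1-10) by (rule card_3_no_common_point)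
  with AB BC CA show xyz: "x \<noteq> y" "y \<noteq> z" "x \<noteq> z"
    by auto
  show "A = {x, z}"
    by (rule card_2_eq_pair[OF assms(5)]) (use AB CA xyz in auto)
  show "B = {x, y}"
    by (rule card_2_eq_pair[OF assms(6)]) (use AB BC xyz in auto)
  show "C = {y, z}"
    by (rule card_2_eq_pair[OF assms(7)]) (use BC CA xyz in auto)
qed

lemma finite_int_edges_if_triangulation:
  assumes "triangulation T"
  shows "finite (int_edges T)"
proof -
  have "finite \<sigma>" if "\<sigma> \<in> T" for \<sigma>
    using assms that by (intro card_ge_0_finite) (auto simp: triangulation_def)
  then have "finite (\<Union>T)"
    using assms by (auto simp: triangulation_def)
  moreover have "int_edges T \<subseteq> Pow (\<Union>T)"
    by (auto simp: int_edges_def edges_def)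
  ultimately show ?thesis
    by (simp add: finite_subset)
qed

locale relaxed_triangle =
  fixes T :: "pt set set" and head :: "pt set \<Rightarrow> pt" and \<gamma> :: "nat \<Rightarrow> pt"
    and r s :: "pt set \<Rightarrow> int"
  assumes finite_int_edges: "finite (int_edges T)"
    and head_in_edge: "\<And>e. e \<in> int_edges T \<Longrightarrow> head e \<in> e"
    and corners_distinct: "\<gamma> 0 \<noteq> \<gamma> 1" "\<gamma> 1 \<noteq> \<gamma> 2" "\<gamma> 0 \<noteq> \<gamma> 2"
    and corners_interior: "\<And>i. i < 3 \<Longrightarrow> \<gamma> i \<in> int_vertices T"
    and sides_interior: "{\<gamma> 0, \<gamma> 1} \<in> int_edges T" "{\<gamma> 1, \<gamma> 2} \<in> int_edges T"
      "{\<gamma> 0, \<gamma> 2} \<in> int_edges T"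
    and relaxed: "s = (\<lambda>e. if e \<in> {{\<gamma> 0, \<gamma> 1}, {\<gamma> 1, \<gamma> 2}, {\<gamma> 0, \<gamma> 2}} then -1 else r e)"
begin

abbreviation sides :: "pt set set" where
  "sides \<equiv> {{\<gamma> 0, \<gamma> 1}, {\<gamma> 1, \<gamma> 2}, {\<gamma> 0, \<gamma> 2}}"

abbreviation J_corners :: "nat \<Rightarrow> bipoly set" where
  "J_corners m \<equiv> set_sum3 (J_vertex m T r (\<gamma> 0)) (J_vertex m T r (\<gamma> 1)) (J_vertex m T r (\<gamma> 2))"

lemma relaxed_side: "e \<in> sides \<Longrightarrow> s e = -1"
  by (simp add: relaxed)

lemma relaxed_off_sides: "e \<notin> sides \<Longrightarrow> s e = r e"
  by (simp add: relaxed)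

lemma sides_subset_int_edges: "sides \<subseteq> int_edges T"
  using sides_interior by simp

lemma bd_side_chain:
  assumes "t \<in> sides" "p \<in> t"
  shows "bd T head (edge_chain head t p c) v = (if v = p then c else if v \<in> t then - c else 0)"
  using subsetD[OF sides_subset_int_edges assms(1)] head_in_edge assms(2)
  by (intro bd_edge_chain[where head = head] finite_int_edges) simp_all

lemma J_vertex_relaxed_corner:
  assumes "i < 3"
  shows "J_vertex m T s (\<gamma> i) = Pm m"
proof -
  let ?t = "{\<gamma> i, \<gamma> (Suc i mod 3)}"
  have "i = 0 \<or> i = 1 \<or> i = 2"
    using assms by auto
  then have side: "?t \<in> sides"
    by (elim disjE) (simp_all add: insert_commute numeral_2_eq_2)
  then have "?t \<in> int_edges T"
    by (rule subsetD[OF sides_subset_int_edges])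
  then have "?t \<in> edges_at T (\<gamma> i)"
    by (simp add: edges_at_def)
  moreover have "s ?t = -1"
    using side by (rule relaxed_side)
  ultimately show ?thesis
    by (intro J_vertex_eq_Pm finite_edges_at finite_int_edges)
qed

lemma J_vertex_relaxed_off_corners:
  assumes "v \<noteq> \<gamma> 0" "v \<noteq> \<gamma> 1" "v \<noteq> \<gamma> 2"
  shows "J_vertex m T s v = J_vertex m T r v"
proof (rule J_vertex_cong)
  fix e assume "e \<in> edges_at T v"
  then have "e \<notin> sides"
    using assms by (auto simp: edges_at_def)
  then show "s e = r e"
    by (rule relaxed_off_sides)
qed

lemma H0_rel_if_corner_sum:
  assumes g: "g \<in> C0 m T s" and sum: "g (\<gamma> 0) + g (\<gamma> 1) + g (\<gamma> 2) \<in> J_corners m"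
  shows "g \<in> H0_rel m T head s r"
proof -
  obtain j\<^sub>0 j\<^sub>1 j\<^sub>2 where j: "j\<^sub>0 \<in> J_vertex m T r (\<gamma> 0)" "j\<^sub>1 \<in> J_vertex m T r (\<gamma> 1)"
      "j\<^sub>2 \<in> J_vertex m T r (\<gamma> 2)"
    and sum_eq: "g (\<gamma> 0) + g (\<gamma> 1) + g (\<gamma> 2) = j\<^sub>0 + j\<^sub>1 + j\<^sub>2"
    using sum by blast
  define c\<^sub>0 where "c\<^sub>0 = g (\<gamma> 0) - j\<^sub>0"
  define c\<^sub>2 where "c\<^sub>2 = g (\<gamma> 2) - j\<^sub>2"
  have c_Pm: "c\<^sub>0 \<in> Pm m" "c\<^sub>2 \<in> Pm m"
    using C0_in_Pm[OF g corners_interior] subsetD[OF J_vertex_subset_Pm j(1)]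
      subsetD[OF J_vertex_subset_Pm j(3)]
    by (auto simp: c\<^sub>0_def c\<^sub>2_def intro!: Pm_diff)
  define f where "f = (\<lambda>e. edge_chain head {\<gamma> 0, \<gamma> 1} (\<gamma> 0) c\<^sub>0 e
                           + edge_chain head {\<gamma> 1, \<gamma> 2} (\<gamma> 2) c\<^sub>2 e)"
  have bd_f: "bd T head f v = (if v = \<gamma> 0 then c\<^sub>0 else if v = \<gamma> 1 then - c\<^sub>0 else 0)
                             + (if v = \<gamma> 2 then c\<^sub>2 else if v = \<gamma> 1 then - c\<^sub>2 else 0)" for v
    unfolding f_def bd_add using corners_distinct by (simp add: bd_side_chain)
  have "f \<in> C1 m T s"
    unfolding f_def using sides_interior relaxed_side c_Pm
    by (intro C1_add edge_chain_in_C1) simp_all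
  moreover have "g v - bd T head f v \<in> J_vertex m T r v" if v: "v \<in> int_vertices T" for v
  proof -
    consider "v = \<gamma> 0" | "v = \<gamma> 1" | "v = \<gamma> 2" | "v \<noteq> \<gamma> 0" "v \<noteq> \<gamma> 1" "v \<noteq> \<gamma> 2"
      by blast
    then show ?thesis
    proof cases
      case 2
      then have "g v - bd T head f v = j\<^sub>1"
        using corners_distinct sum_eq by (simp add: bd_f c\<^sub>0_def c\<^sub>2_def algebra_simps)
      with 2 j show ?thesis by simp
    next
      case 4
      then have "g v \<in> J_vertex m T r v"
        using C0_in_J_vertex[OF g v] J_vertex_relaxed_off_corners[OF 4] by simp
      with 4 show ?thesis by (simp add: bd_f)
    qed (use corners_distinct j in \<open>simp_all add: bd_f c\<^sub>0_def c\<^sub>2_def\<close>)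
  qed
  ultimately show ?thesis
    using g unfolding H0_rel_def by blast
qed

lemma corner_sum_if_H0_rel:
  assumes "g \<in> H0_rel m T head s r"
  shows "g (\<gamma> 0) + g (\<gamma> 1) + g (\<gamma> 2) \<in> J_corners m"
proof -
  obtain f where f: "f \<in> C1 m T s"
    and g_bd: "\<And>v. v \<in> int_vertices T \<Longrightarrow> g v - bd T head f v \<in> J_vertex m T r v"
    using assms unfolding H0_rel_def by blast
  define f_sides where "f_sides = (\<lambda>e. if e \<in> sides then f e else 0)"
  define f_rest where "f_rest = (\<lambda>e. if e \<in> sides then 0 else f e)"
  have "f = (\<lambda>e. f_rest e + f_sides e)"
    by (auto simp: f_rest_def f_sides_def)
  then have bd_split: "bd T head f v = bd T head f_rest v + bd T head f_sides v" for v
    by (metis bd_add)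
  have bd_rest: "bd T head f_rest v \<in> J_vertex m T r v" for v
    unfolding f_rest_def using f relaxed_off_sides by (rule bd_off_in_J_vertex)
  have "(\<Sum>v\<in>{\<gamma> 0, \<gamma> 1, \<gamma> 2}. bd T head f_sides v) = 0"
  proof (rule sum_bd_eq_0[OF finite_int_edges _ head_in_edge])
    fix e assume "f_sides e \<noteq> 0"
    then have "e \<in> sides"
      by (metis f_sides_def)
    then show "e \<subseteq> {\<gamma> 0, \<gamma> 1, \<gamma> 2}"
      by auto
  qed simp
  then have "g (\<gamma> 0) + g (\<gamma> 1) + g (\<gamma> 2)
      = (g (\<gamma> 0) - bd T head f (\<gamma> 0) + bd T head f_rest (\<gamma> 0))
      + (g (\<gamma> 1) - bd T head f (\<gamma> 1) + bd T head f_rest (\<gamma> 1))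
      + (g (\<gamma> 2) - bd T head f (\<gamma> 2) + bd T head f_rest (\<gamma> 2))"
    using corners_distinct by (simp add: bd_split algebra_simps)
  moreover have "g (\<gamma> i) - bd T head f (\<gamma> i) + bd T head f_rest (\<gamma> i) \<in> J_vertex m T r (\<gamma> i)"
    if "i < 3" for i
    using g_bd[OF corners_interior[OF that]] bd_rest by (rule J_vertex_add)
  ultimately show ?thesis
    by fastforce
qed

lemma quot_iso_H0_rel:
  "quot_iso fsc psc (C0 m T s) (H0_rel m T head s r) (Pm m) (J_corners m)"
proof (rule quot_iso_sum3I[where a\<^sub>0 = "\<gamma> 0" and a\<^sub>1 = "\<gamma> 1" and a\<^sub>2 = "\<gamma> 2"])
  fix g assume "g \<in> C0 m T s"
  then show "g (\<gamma> 0) + g (\<gamma> 1) + g (\<gamma> 2) \<in> J_corners m \<longleftrightarrow> g \<in> H0_rel m T head s r"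
    using H0_rel_if_corner_sum corner_sum_if_H0_rel by blast
next
  fix y assume "y \<in> Pm m"
  then show "(\<lambda>v. if v = \<gamma> 0 then y else 0) \<in> C0 m T s"
    using corners_interior[of 0] J_vertex_relaxed_corner[of 0] by (auto simp: C0_def J_vertex_zero)
next
  have "(0::bipoly) = 0 + 0 + 0"
    by simp
  then show "0 \<in> J_corners m"
    using J_vertex_zero by blast
qed (use C0_in_Pm corners_interior corners_distinct in auto)

end

theorem mainTheorem3:
  fixes T :: "pt set set" and m :: nat and r :: int and rr :: "pt set \<Rightarrow> int"
    and \<sigma> :: "pt set" and \<tau> :: "nat \<Rightarrow> pt set" and \<gamma> :: "nat \<Rightarrow> pt"
    and l :: "nat \<Rightarrow> bipoly" and head :: "pt set \<Rightarrow> pt"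
  assumes "triangulation T"
    and "r \<ge> -1"
    and "smoothness_distribution T rr"
    and "\<forall>e\<in>int_edges T. rr e = r \<or> rr e = -1"
    and "\<sigma> \<in> T"
    and "\<forall>i<3. \<tau> i \<subseteq> \<sigma> \<and> card (\<tau> i) = 2 \<and> \<tau> i \<in> int_edges T \<and> rr (\<tau> i) = r"
    and "\<tau> 0 \<noteq> \<tau> 1" and "\<tau> 1 \<noteq> \<tau> 2" and "\<tau> 0 \<noteq> \<tau> 2"
    and "\<forall>i<3. \<tau> i \<inter> \<tau> (Suc i mod 3) = {\<gamma> i} \<and> \<gamma> i \<in> int_vertices T"
    and "\<forall>e\<in>int_edges T. (\<exists>i<3. \<gamma> i \<in> e) \<longrightarrow> rr e \<noteq> -1"
    and "\<forall>i<3. l i \<in> Pm 1 \<and> l i \<notin> {[:[:c:]:] | c. True} \<and>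
               (\<forall>p\<in>convex hull (\<tau> i). eval2 (l i) p = 0)"
    and "\<forall>e\<in>int_edges T. head e \<in> e"
  shows "quot_iso fsc psc (Pm3 m) (coker_rel m (\<lambda>i. J_vertex m T rr (\<gamma> i)))
           (Pm m) {g0 + g1 + g2 | g0 g1 g2. g0 \<in> J_vertex m T rr (\<gamma> 0) \<and>
                     g1 \<in> J_vertex m T rr (\<gamma> 1) \<and> g2 \<in> J_vertex m T rr (\<gamma> 2)}
       \<and> quot_iso fsc psc
           (C0 m T (\<lambda>e. if e \<in> \<tau> ` {0,1,2} then -1 else rr e))
           (H0_rel m T head (\<lambda>e. if e \<in> \<tau> ` {0,1,2} then -1 else rr e) rr)
           (Pm m) {g0 + g1 + g2 | g0 g1 g2. g0 \<in> J_vertex m T rr (\<gamma> 0) \<and>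
                     g1 \<in> J_vertex m T rr (\<gamma> 1) \<and> g2 \<in> J_vertex m T rr (\<gamma> 2)}"
proof -
  have \<tau>: "\<tau> i \<subseteq> \<sigma>" "card (\<tau> i) = 2" "\<tau> i \<in> int_edges T" if "i < 3" for i
    using assms(6) that by auto
  have \<gamma>: "\<gamma> i \<in> int_vertices T" if "i < 3" for i
    using assms(10) that by auto
  have meet: "\<tau> 0 \<inter> \<tau> 1 = {\<gamma> 0}" "\<tau> 1 \<inter> \<tau> 2 = {\<gamma> 1}" "\<tau> 2 \<inter> \<tau> 0 = {\<gamma> 2}"
    using assms(10)[rule_format, of 0] assms(10)[rule_format, of 1] assms(10)[rule_format, of 2]
    by (simp_all add: numeral_2_eq_2)
  have "card \<sigma> = 3"
    using assms(1,5) by (simp add: triangulation_def)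
  note corners = triangle_sides[OF this \<tau>(1)[of 0] \<tau>(1)[of 1] \<tau>(1)[of 2] \<tau>(2)[of 0] \<tau>(2)[of 1]
      \<tau>(2)[of 2] assms(7-9) meet, simplified]
  have "\<tau> ` {0, 1, 2} = {{\<gamma> 0, \<gamma> 1}, {\<gamma> 1, \<gamma> 2}, {\<gamma> 0, \<gamma> 2}}"
    by (simp add: corners(4-6) insert_commute)
  then interpret relaxed_triangle T head \<gamma> rr "\<lambda>e. if e \<in> \<tau> ` {0,1,2} then -1 else rr e"
    using finite_int_edges_if_triangulation[OF assms(1)] assms(13) corners \<gamma>
      \<tau>(3)[of 0] \<tau>(3)[of 1] \<tau>(3)[of 2]
    by unfold_locales simp_all
  show ?thesis
    using quot_iso_coker[of "\<lambda>i. J_vertex m T rr (\<gamma> i)" m] J_vertex_zero J_vertex_subset_Pm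
      quot_iso_H0_rel by simp
qed

end
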